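(* Consider the sequentially observed MDP described in the context. Define functions on nonnegative vectors $\mathbf{x}\in\mathbb{R}^n_{\ge 0}$ by $J_N(\mathbf{x})=\mathbf{x}^T\mathbf{r}_N$ and, for $t=N-1,\dots,1$, $$J_t(\mathbf{x})=\max_{P_1(t),\dots,P_n(t)\in\mathcal{C}}\Big\{\mathbf{x}^T\mathbf{r}_t+J_{t+1}(M_t\mathbf{x})\Big\}.$$ Define vectors $V^*_t\in\mathbb{R}^n$ recursively by $V^*_N=\mathbf{r}_N$ and, for $t=N-1,\dots,1$ and $i=1,\dots,n$, $$V^*_t(i)=\max_{P_i(t)\in\mathcal{C}}\Big\{r_t(i)+M^{Ti}_tV^*_{t+1}\Big\}.$$ Then for every $t=1,\dots,N$ and every $\mathbf{x}\in\mathbb{R}^n_{\ge 0}$, $J_t(\mathbf{x})=\mathbf{x}^TV^*_t$.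
   Context: States $S=\{1,\dots,n\}$; at every state the available actions are $a_1,\dots,a_m$ (in this fixed order); decision epochs $t=1,\dots,N-1$ with $N\ge 2$. For each epoch $t$, state $i$, action index $k$, let $G_i(j,k,t)\ge 0$ with $\sum_{j}G_i(j,k,t)=1$ be the probability that taking action $a_k$ in state $i$ leads to state $j$. Rewards $r_t(i,a_k)\in\mathbb{R}$ for $t\le N-1$ and terminal rewards $r_N(i)\in\mathbb{R}$; $\mathbf{r}_N$ is the vector with entries $r_N(i)$. Model: at each epoch the agent in state $i$ observes, in phase $k=1,\dots,m-1$, the realized transition of action $a_k$ and accepts it (taking $a_k$) or rejects it and moves to phase $k+1$; if all $a_1,\dots,a_{m-1}$ are rejected, $a_m$ is taken. The decision variables at epoch $t$ are matrices $P_i(t)\in[0,1]^{n\times m}$, $i=1,\dots,n$, whose entry $P_i(j,k,t)$ is the probability of accepting an observed transition to state $j$ when in state $i$, phase $k$, epoch $t$, with the convention $P_i(j,m,t)=1$ for all $j$; $\mathcal{C}$ denotes the set of all such matrices. Dropping the index $t$: $q_i(a_k)=\sum_{j}G_i(j,k)P_i(j,k)$ (so $q_i(a_m)=1$); $p_i(a_k)=\big(\prod_{l=1}^{k-1}(1-q_i(a_l))\big)q_i(a_k)$ (empty product equal to $1$); $r_t(i)=\sum_{k=1}^m p_i(a_k)r_t(i,a_k)$, and $\mathbf{r}_t$ is the vector with entries $r_t(i)$; $M_t$ is the $n\times n$ matrix with entries $M_t(j,i)=\sum_{k=1}^m\big(\prod_{l=1}^{k-1}(1-q_i(a_l))\big)G_i(j,k)P_i(j,k)$.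 Thus $r_t(i)$ and the $i$-th column of $M_t$ depend only on $P_i(t)$; $M^{Ti}_t$ denotes the transpose of the $i$-th column of $M_t$. The state distribution evolves as $\mathbf{x}_{t+1}=M_t\mathbf{x}_t$. *)

theory Defs
  imports Complex_Main
begin

text \<open>States are 1..n, action indices 1..m, epochs t = 1..N-1.
  G t i j k = probability that action a_k in state i at epoch t leads to state j.
  r t i k = reward r_t(i,a_k); rN i = terminal reward r_N(i).
  A decision matrix P_i(t) is a function Pi :: nat => nat => real with
  Pi j k = acceptance probability of an observed transition to j in phase k.\<close>

definition in_C :: "nat \<Rightarrow> nat \<Rightarrow> (nat \<Rightarrow> nat \<Rightarrow> real) \<Rightarrow> bool" where
  "in_C n m Pi \<longleftrightarrow>
     (\<forall>j\<in>{1..n}. \<forall>k\<in>{1..m}. 0 \<le> Pi j k \<and> Pi j k \<le> 1) \<and> (\<forall>j\<in>{1..n}. Pi j m = 1)"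

definition qa :: "nat \<Rightarrow> (nat \<Rightarrow> nat \<Rightarrow> nat \<Rightarrow> nat \<Rightarrow> real) \<Rightarrow> nat \<Rightarrow> nat
                   \<Rightarrow> (nat \<Rightarrow> nat \<Rightarrow> real) \<Rightarrow> nat \<Rightarrow> real" where
  "qa n G t i Pi k = (\<Sum>j=1..n. G t i j k * Pi j k)"

definition pa :: "nat \<Rightarrow> (nat \<Rightarrow> nat \<Rightarrow> nat \<Rightarrow> nat \<Rightarrow> real) \<Rightarrow> nat \<Rightarrow> nat
                   \<Rightarrow> (nat \<Rightarrow> nat \<Rightarrow> real) \<Rightarrow> nat \<Rightarrow> real" where
  "pa n G t i Pi k = (\<Prod>l\<in>{1..<k}. 1 - qa n G t i Pi l) * qa n G t i Pi k"

definition rt :: "nat \<Rightarrow> nat \<Rightarrow> (nat \<Rightarrow> nat \<Rightarrow> nat \<Rightarrow> nat \<Rightarrow> real) \<Rightarrow> (nat \<Rightarrow> nat \<Rightarrow> nat \<Rightarrow> real)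
                   \<Rightarrow> nat \<Rightarrow> nat \<Rightarrow> (nat \<Rightarrow> nat \<Rightarrow> real) \<Rightarrow> real" where
  "rt n m G r t i Pi = (\<Sum>k=1..m. pa n G t i Pi k * r t i k)"

text \<open>M_t(j,i): the i-th column of M_t, depending only on P_i(t)\<close>
definition Mt :: "nat \<Rightarrow> nat \<Rightarrow> (nat \<Rightarrow> nat \<Rightarrow> nat \<Rightarrow> nat \<Rightarrow> real)
                   \<Rightarrow> nat \<Rightarrow> nat \<Rightarrow> (nat \<Rightarrow> nat \<Rightarrow> real) \<Rightarrow> nat \<Rightarrow> real" where
  "Mt n m G t i Pi j =
     (\<Sum>k=1..m. (\<Prod>l\<in>{1..<k}. 1 - qa n G t i Pi l) * G t i j k * Pi j k)"

text \<open>Value function with k remaining stages: Jrem k x = J_{N-k}(x).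
  The maximum over C is written as a supremum (it is attained, by compactness).\<close>
fun Jrem :: "nat \<Rightarrow> nat \<Rightarrow> nat \<Rightarrow> (nat \<Rightarrow> nat \<Rightarrow> nat \<Rightarrow> nat \<Rightarrow> real)
               \<Rightarrow> (nat \<Rightarrow> nat \<Rightarrow> nat \<Rightarrow> real) \<Rightarrow> (nat \<Rightarrow> real)
               \<Rightarrow> nat \<Rightarrow> (nat \<Rightarrow> real) \<Rightarrow> real" where
  "Jrem n m N G r rN 0 x = (\<Sum>i=1..n. x i * rN i)"
| "Jrem n m N G r rN (Suc k) x =
     (let t = N - Suc k in
      Sup {(\<Sum>i=1..n. x i * rt n m G r t i (P i))
             + Jrem n m N G r rN k (\<lambda>j. \<Sum>i=1..n. Mt n m G t i (P i) j * x i)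
           | P. \<forall>i\<in>{1..n}. in_C n m (P i)})"

definition J :: "nat \<Rightarrow> nat \<Rightarrow> nat \<Rightarrow> (nat \<Rightarrow> nat \<Rightarrow> nat \<Rightarrow> nat \<Rightarrow> real)
               \<Rightarrow> (nat \<Rightarrow> nat \<Rightarrow> nat \<Rightarrow> real) \<Rightarrow> (nat \<Rightarrow> real)
               \<Rightarrow> nat \<Rightarrow> (nat \<Rightarrow> real) \<Rightarrow> real" where
  "J n m N G r rN t x = Jrem n m N G r rN (N - t) x"

fun Vrem :: "nat \<Rightarrow> nat \<Rightarrow> nat \<Rightarrow> (nat \<Rightarrow> nat \<Rightarrow> nat \<Rightarrow> nat \<Rightarrow> real)
               \<Rightarrow> (nat \<Rightarrow> nat \<Rightarrow> nat \<Rightarrow> real) \<Rightarrow> (nat \<Rightarrow> real)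
               \<Rightarrow> nat \<Rightarrow> nat \<Rightarrow> real" where
  "Vrem n m N G r rN 0 i = rN i"
| "Vrem n m N G r rN (Suc k) i =
     (let t = N - Suc k in
      Sup {rt n m G r t i Pi + (\<Sum>j=1..n. Mt n m G t i Pi j * Vrem n m N G r rN k j)
           | Pi. in_C n m Pi})"

definition Vstar :: "nat \<Rightarrow> nat \<Rightarrow> nat \<Rightarrow> (nat \<Rightarrow> nat \<Rightarrow> nat \<Rightarrow> nat \<Rightarrow> real)
               \<Rightarrow> (nat \<Rightarrow> nat \<Rightarrow> nat \<Rightarrow> real) \<Rightarrow> (nat \<Rightarrow> real)
               \<Rightarrow> nat \<Rightarrow> nat \<Rightarrow> real" where
  "Vstar n m N G r rN t i = Vrem n m N G r rN (N - t) i"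

end

theory Submission
  imports Defs
begin

text \<open>If \<open>J\<^sub>t\<^sub>+\<^sub>1\<close> is the linear
  form \<open>x \<mapsto> x\<^sup>T V*\<^sub>t\<^sub>+\<^sub>1\<close> on nonnegative vectors, then, since \<open>M\<^sub>t x \<ge> 0\<close>, the objective defining
  \<open>J\<^sub>t(x)\<close> equals \<open>\<Sum>\<^sub>i x\<^sub>i (r\<^sub>t(i) + M\<^sub>t\<^sup>T\<^sup>i V*\<^sub>t\<^sub>+\<^sub>1)\<close>, whose \<open>i\<close>-th term depends on \<open>P\<^sub>i(t)\<close> only.
  The choices of \<open>P\<^sub>1(t), \<dots>, P\<^sub>n(t)\<close> being independent and the weights \<open>x\<^sub>i\<close> nonnegative,
  the supremum of the sum is the sum of the weighted suprema, which is \<open>x\<^sup>T V*\<^sub>t\<close>. All entries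
  of \<open>M\<^sub>t\<close> lie in \<open>[0, \<Sum>\<^sub>k G\<^sub>i(j,k)]\<close> and all \<open>p\<^sub>i(a\<^sub>k)\<close> in \<open>[0,1]\<close>, so every supremum involved is
  over a bounded set and the real \<open>Sup\<close> is the genuine one.\<close>

lemma bdd_above_image_mult_left_nonneg:
  fixes f :: "'a \<Rightarrow> real"
  assumes "bdd_above (f ` S)" and "0 \<le> c"
  shows "bdd_above ((\<lambda>s. c * f s) ` S)"
proof -
  obtain B where "\<And>s. s \<in> S \<Longrightarrow> f s \<le> B"
    using assms(1) by (auto simp: bdd_above_def)
  then show ?thesis
    using assms(2) by (intro bdd_aboveI2[where M="c * B"]) (simp add: mult_left_mono)
qed

lemma cSUP_mult_left_nonneg:
  fixes f :: "'a \<Rightarrow> real"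
  assumes "S \<noteq> {}" and bdd: "bdd_above (f ` S)" and "0 \<le> c"
  shows "(SUP s\<in>S. c * f s) = c * (SUP s\<in>S. f s)"
proof (cases "c = 0")
  case False
  with \<open>0 \<le> c\<close> have "0 < c" by simp
  have bdd_scaled: "bdd_above ((\<lambda>s. c * f s) ` S)"
    using bdd \<open>0 \<le> c\<close> by (rule bdd_above_image_mult_left_nonneg)
  show ?thesis
  proof (rule antisym)
    show "(SUP s\<in>S. c * f s) \<le> c * (SUP s\<in>S. f s)"
      using \<open>S \<noteq> {}\<close> bdd \<open>0 \<le> c\<close> by (intro cSUP_least mult_left_mono cSUP_upper) auto
    have "(SUP s\<in>S. f s) \<le> (SUP s\<in>S. c * f s) / c"
      using \<open>S \<noteq> {}\<close> \<open>0 < c\<close> bdd_scaled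
      by (intro cSUP_least) (auto simp: pos_le_divide_eq mult.commute intro: cSUP_upper)
    then show "c * (SUP s\<in>S. f s) \<le> (SUP s\<in>S. c * f s)"
      using \<open>0 < c\<close> by (simp add: pos_le_divide_eq mult.commute)
  qed
qed (use \<open>S \<noteq> {}\<close> in simp)

lemma cSUP_sum_independent:
  fixes g :: "'i \<Rightarrow> 'c \<Rightarrow> real"
  assumes "finite A"
    and nonempty: "\<And>i. i \<in> A \<Longrightarrow> S i \<noteq> {}"
    and bdd: "\<And>i. i \<in> A \<Longrightarrow> bdd_above (g i ` S i)"
  shows "(SUP P\<in>{P. \<forall>i\<in>A. P i \<in> S i}. \<Sum>i\<in>A. g i (P i)) = (\<Sum>i\<in>A. SUP c\<in>S i. g i c)"
    (is "(SUP P\<in>?choices. ?sum P) = ?bound")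
proof (rule antisym)
  have "\<forall>i\<in>A. \<exists>c. c \<in> S i" using nonempty by blast
  then have "?choices \<noteq> {}" by (auto dest: bchoice)
  moreover have "?sum P \<le> ?bound" if "P \<in> ?choices" for P
    using that bdd by (intro sum_mono cSUP_upper) auto
  ultimately show "(SUP P\<in>?choices. ?sum P) \<le> ?bound"
    by (rule cSUP_least)
  have bdd_choices: "bdd_above (?sum ` ?choices)"
    using \<open>\<And>P. P \<in> ?choices \<Longrightarrow> ?sum P \<le> ?bound\<close> by (rule bdd_aboveI2) simp
  show "?bound \<le> (SUP P\<in>?choices. ?sum P)"
  proof (rule field_le_epsilon)
    fix e :: real assume "0 < e"
    define d where "d = e / (card A + 1)"
    have "0 < d" using \<open>0 < e\<close> by (simp add: d_def)
    have "\<forall>i\<in>A. \<exists>c\<in>S i. (SUP c\<in>S i. g i c) - d < g i c"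
    proof
      fix i assume "i \<in> A"
      then show "\<exists>c\<in>S i. (SUP c\<in>S i. g i c) - d < g i c"
        using nonempty bdd \<open>0 < d\<close> by (subst less_cSUP_iff[symmetric]) auto
    qed
    then obtain P where P: "\<And>i. i \<in> A \<Longrightarrow> P i \<in> S i \<and> (SUP c\<in>S i. g i c) - d < g i (P i)"
      by metis
    have "?bound \<le> (\<Sum>i\<in>A. g i (P i) + d)"
      using P by (intro sum_mono) (simp add: less_imp_le algebra_simps)
    also have "\<dots> = ?sum P + card A * d"
      by (simp add: sum.distrib)
    also have "\<dots> \<le> (SUP P\<in>?choices. ?sum P) + e"
    proof (rule add_mono)
      show "?sum P \<le> (SUP P\<in>?choices. ?sum P)"
        using P bdd_choices by (intro cSUP_upper) auto
      show "card A * d \<le> e"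
        using \<open>0 < e\<close> by (simp add: d_def field_simps)
    qed
    finally show "?bound \<le> (SUP P\<in>?choices. ?sum P) + e" .
  qed
qed

definition stochastic_kernel ::
    "nat \<Rightarrow> nat \<Rightarrow> (nat \<Rightarrow> nat \<Rightarrow> nat \<Rightarrow> nat \<Rightarrow> real) \<Rightarrow> nat \<Rightarrow> nat \<Rightarrow> bool" where
  "stochastic_kernel n m G t i \<longleftrightarrow>
     (\<forall>j\<in>{1..n}. \<forall>k\<in>{1..m}. 0 \<le> G t i j k) \<and> (\<forall>k\<in>{1..m}. (\<Sum>j=1..n. G t i j k) = 1)"

context
  fixes n m :: nat and G :: "nat \<Rightarrow> nat \<Rightarrow> nat \<Rightarrow> nat \<Rightarrow> real" and t i :: nat
    and Pi :: "nat \<Rightarrow> nat \<Rightarrow> real"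
  assumes kernel: "stochastic_kernel n m G t i" and admissible: "in_C n m Pi"
begin

lemma qa_bounds:
  assumes "k \<in> {1..m}"
  shows "0 \<le> qa n G t i Pi k \<and> qa n G t i Pi k \<le> 1"
proof -
  have G: "\<forall>j\<in>{1..n}. 0 \<le> G t i j k" and "(\<Sum>j=1..n. G t i j k) = 1"
    using kernel assms by (auto simp: stochastic_kernel_def)
  moreover have P: "\<forall>j\<in>{1..n}. 0 \<le> Pi j k \<and> Pi j k \<le> 1"
    using admissible assms by (auto simp: in_C_def)
  moreover have "qa n G t i Pi k \<le> (\<Sum>j=1..n. G t i j k)"
    unfolding qa_def using G P by (intro sum_mono) (simp add: mult_left_le)
  ultimately show ?thesis
    unfolding qa_def by (auto intro: sum_nonneg)
qed

lemma rejection_prod_bounds: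
  assumes "k \<in> {1..m}"
  shows "0 \<le> (\<Prod>l\<in>{1..<k}. 1 - qa n G t i Pi l) \<and> (\<Prod>l\<in>{1..<k}. 1 - qa n G t i Pi l) \<le> 1"
proof -
  have "\<forall>l\<in>{1..<k}. 0 \<le> 1 - qa n G t i Pi l \<and> 1 - qa n G t i Pi l \<le> 1"
    using qa_bounds assms by fastforce
  then show ?thesis by (auto intro: prod_nonneg prod_le_1)
qed

lemma Mt_bounds:
  assumes "j \<in> {1..n}"
  shows "0 \<le> Mt n m G t i Pi j \<and> Mt n m G t i Pi j \<le> (\<Sum>k=1..m. G t i j k)"
proof -
  have "0 \<le> (\<Prod>l\<in>{1..<k}. 1 - qa n G t i Pi l) * G t i j k * Pi j k
        \<and> (\<Prod>l\<in>{1..<k}. 1 - qa n G t i Pi l) * G t i j k * Pi j k \<le> G t i j k"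
    if k: "k \<in> {1..m}" for k
  proof -
    let ?s = "\<Prod>l\<in>{1..<k}. 1 - qa n G t i Pi l"
    have G: "0 \<le> G t i j k" using kernel assms k by (auto simp: stochastic_kernel_def)
    have P: "0 \<le> Pi j k \<and> Pi j k \<le> 1" using admissible assms k by (auto simp: in_C_def)
    have "?s * Pi j k \<le> 1" using rejection_prod_bounds[OF k] P by (auto intro: mult_le_one)
    then have "G t i j k * (?s * Pi j k) \<le> G t i j k" using G by (rule mult_left_le)
    then show ?thesis using G P rejection_prod_bounds[OF k] by (simp add: mult_ac)
  qed
  then show ?thesis unfolding Mt_def by (auto intro: sum_nonneg sum_mono)
qed

lemma rt_le_sum_abs: "rt n m G r t i Pi \<le> (\<Sum>k=1..m. \<bar>r t i k\<bar>)"
  unfolding rt_def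
proof (rule sum_mono)
  fix k assume k: "k \<in> {1..m}"
  have "0 \<le> pa n G t i Pi k \<and> pa n G t i Pi k \<le> 1"
    using rejection_prod_bounds[OF k] qa_bounds[OF k] unfolding pa_def
    by (metis mult_le_one mult_nonneg_nonneg)
  then have "\<bar>pa n G t i Pi k * r t i k\<bar> \<le> \<bar>r t i k\<bar>"
    by (simp add: abs_mult mult_left_le_one_le)
  then show "pa n G t i Pi k * r t i k \<le> \<bar>r t i k\<bar>" by linarith
qed

end

lemma bdd_above_Bellman_objective:
  assumes "stochastic_kernel n m G t i"
  shows "bdd_above ((\<lambda>Pi. rt n m G r t i Pi + (\<Sum>j=1..n. Mt n m G t i Pi j * V j)) ` Collect (in_C n m))"
proof (rule bdd_aboveI2)
  fix Pi assume admissible: "Pi \<in> Collect (in_C n m)"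
  have "Mt n m G t i Pi j * V j \<le> (\<Sum>k=1..m. G t i j k) * \<bar>V j\<bar>" if "j \<in> {1..n}" for j
  proof -
    have "0 \<le> Mt n m G t i Pi j" "Mt n m G t i Pi j \<le> (\<Sum>k=1..m. G t i j k)"
      using Mt_bounds[OF assms _ that, of Pi] admissible by auto
    then have "Mt n m G t i Pi j * V j \<le> Mt n m G t i Pi j * \<bar>V j\<bar>"
      by (intro mult_left_mono) auto
    also have "\<dots> \<le> (\<Sum>k=1..m. G t i j k) * \<bar>V j\<bar>"
      using \<open>Mt n m G t i Pi j \<le> _\<close> by (rule mult_right_mono) simp
    finally show ?thesis .
  qed
  then have "(\<Sum>j=1..n. Mt n m G t i Pi j * V j) \<le> (\<Sum>j=1..n. (\<Sum>k=1..m. G t i j k) * \<bar>V j\<bar>)"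
    by (rule sum_mono)
  then show "rt n m G r t i Pi + (\<Sum>j=1..n. Mt n m G t i Pi j * V j)
      \<le> (\<Sum>k=1..m. \<bar>r t i k\<bar>) + (\<Sum>j=1..n. (\<Sum>k=1..m. G t i j k) * \<bar>V j\<bar>)"
    using rt_le_sum_abs[OF assms, of Pi r] admissible by (intro add_mono) auto
qed

lemma sum_column_decomposition:
  fixes x R V :: "nat \<Rightarrow> real" and M :: "nat \<Rightarrow> nat \<Rightarrow> real"
  shows "(\<Sum>i\<in>A. x i * R i) + (\<Sum>j\<in>B. (\<Sum>i\<in>A. M i j * x i) * V j)
       = (\<Sum>i\<in>A. x i * (R i + (\<Sum>j\<in>B. M i j * V j)))"
  by (simp add: distrib_left sum.distrib sum_distrib_left sum_distrib_right mult_ac sum.swap[of _ B])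

lemma Jrem_eq_sum_Vrem:
  assumes kernel: "\<And>t i. t \<in> {1..N-1} \<Longrightarrow> i \<in> {1..n} \<Longrightarrow> stochastic_kernel n m G t i"
  shows "k \<le> N - 1 \<Longrightarrow> \<forall>i\<in>{1..n}. 0 \<le> x i \<Longrightarrow>
           Jrem n m N G r rN k x = (\<Sum>i=1..n. x i * Vrem n m N G r rN k i)"
proof (induction k arbitrary: x)
  case 0
  then show ?case by simp
next
  case (Suc k)
  define t where "t = N - Suc k"
  have kernel_t: "stochastic_kernel n m G t i" if "i \<in> {1..n}" for i
    using Suc.prems(1) that by (intro kernel) (auto simp: t_def)
  have admissible_nonempty: "Collect (in_C n m) \<noteq> {}"
    by (auto simp: in_C_def intro!: exI[of _ "\<lambda>j k. 1"])
  define V where "V = Vrem n m N G r rN k"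
  define f where "f i Pi = rt n m G r t i Pi + (\<Sum>j=1..n. Mt n m G t i Pi j * V j)" for i Pi
  define choices where "choices = {P. \<forall>i\<in>{1..n}. P i \<in> Collect (in_C n m)}"
  have split: "(\<Sum>i=1..n. x i * rt n m G r t i (P i))
             + Jrem n m N G r rN k (\<lambda>j. \<Sum>i=1..n. Mt n m G t i (P i) j * x i)
             = (\<Sum>i=1..n. x i * f i (P i))" if "P \<in> choices" for P
  proof -
    have "0 \<le> (\<Sum>i=1..n. Mt n m G t i (P i) j * x i)" if "j \<in> {1..n}" for j
      using Mt_bounds[OF kernel_t _ \<open>j \<in> {1..n}\<close>] \<open>P \<in> choices\<close> Suc.prems(2)
      by (intro sum_nonneg mult_nonneg_nonneg) (auto simp: choices_def)
    then have "Jrem n m N G r rN k (\<lambda>j. \<Sum>i=1..n. Mt n m G t i (P i) j * x i)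
             = (\<Sum>j=1..n. (\<Sum>i=1..n. Mt n m G t i (P i) j * x i) * V j)"
      using Suc.IH Suc.prems(1) by (simp add: V_def)
    then show ?thesis
      by (simp add: f_def sum_column_decomposition)
  qed
  have "Jrem n m N G r rN (Suc k) x
      = (SUP P\<in>choices. (\<Sum>i=1..n. x i * rt n m G r t i (P i))
             + Jrem n m N G r rN k (\<lambda>j. \<Sum>i=1..n. Mt n m G t i (P i) j * x i))"
    by (simp add: Let_def t_def choices_def setcompr_eq_image)
  also have "\<dots> = (SUP P\<in>choices. \<Sum>i=1..n. x i * f i (P i))"
    using split by (rule SUP_cong[OF refl])
  also have "\<dots> = (\<Sum>i=1..n. SUP Pi\<in>Collect (in_C n m). x i * f i Pi)"
    unfolding choices_def
  proof (rule cSUP_sum_independent)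
    show "Collect (in_C n m) \<noteq> {}"
      by (fact admissible_nonempty)
    show "bdd_above ((\<lambda>Pi. x i * f i Pi) ` Collect (in_C n m))" if "i \<in> {1..n}" for i
      using bdd_above_Bellman_objective[OF kernel_t[OF that]] Suc.prems(2) that
      unfolding f_def by (intro bdd_above_image_mult_left_nonneg) auto
  qed simp
  also have "\<dots> = (\<Sum>i=1..n. x i * (SUP Pi\<in>Collect (in_C n m). f i Pi))"
    using bdd_above_Bellman_objective[OF kernel_t] Suc.prems(2) admissible_nonempty
    unfolding f_def by (intro sum.cong refl cSUP_mult_left_nonneg) auto
  also have "\<dots> = (\<Sum>i=1..n. x i * Vrem n m N G r rN (Suc k) i)"
    by (simp add: f_def V_def t_def Let_def setcompr_eq_image)
  finally show ?case .
qed

theorem proposition1: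
  fixes n m N :: nat
    and G :: "nat \<Rightarrow> nat \<Rightarrow> nat \<Rightarrow> nat \<Rightarrow> real"
    and r :: "nat \<Rightarrow> nat \<Rightarrow> nat \<Rightarrow> real"
    and rN :: "nat \<Rightarrow> real"
  assumes "n \<ge> 1" and "m \<ge> 1" and "N \<ge> 2"
    and G_nonneg: "\<And>t i j k. t \<in> {1..N-1} \<Longrightarrow> i \<in> {1..n} \<Longrightarrow> j \<in> {1..n} \<Longrightarrow> k \<in> {1..m}
                     \<Longrightarrow> G t i j k \<ge> 0"
    and G_stoch: "\<And>t i k. t \<in> {1..N-1} \<Longrightarrow> i \<in> {1..n} \<Longrightarrow> k \<in> {1..m}
                     \<Longrightarrow> (\<Sum>j=1..n. G t i j k) = 1"
  shows "\<forall>t\<in>{1..N}. \<forall>x. (\<forall>i\<in>{1..n}. x i \<ge> 0) \<longrightarrow>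
           J n m N G r rN t x = (\<Sum>i=1..n. x i * Vstar n m N G r rN t i)"
proof (intro ballI allI impI)
  fix t and x :: "nat \<Rightarrow> real"
  assume "t \<in> {1..N}" and "\<forall>i\<in>{1..n}. 0 \<le> x i"
  moreover have "stochastic_kernel n m G t' i" if "t' \<in> {1..N-1}" and "i \<in> {1..n}" for t' i
    using G_nonneg G_stoch that by (simp add: stochastic_kernel_def)
  ultimately show "J n m N G r rN t x = (\<Sum>i=1..n. x i * Vstar n m N G r rN t i)"
    unfolding J_def Vstar_def by (intro Jrem_eq_sum_Vrem) auto
qed

end
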